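(* Fix $\lambda\in[0,1)$ and $p\in[0,1]$, and denote by $\mathbf{v}(\mathbf{v}^0,\cdot)$ the unique solution to the fluid model with initial condition $\mathbf{v}^0\in\overline{\mathcal{V}}^\infty$. If $\mathbf{w}^n\in\overline{\mathcal{V}}^\infty$ for all $n$ and $\|\mathbf{w}^n-\mathbf{v}^0\|_w\to0$ as $n\to\infty$, then for all $t\ge0$, $\lim_{n\to\infty}\|\mathbf{v}(\mathbf{w}^n,t)-\mathbf{v}(\mathbf{v}^0,t)\|_w=0$.
   Context: $\mathcal{S}=\{\mathbf{s}\in[0,1]^{\mathbb{Z}_+}:1=\mathbf{s}_0\ge\mathbf{s}_1\ge\cdots\ge0\}$, $\overline{\mathcal{S}}^\infty=\{\mathbf{s}\in\mathcal{S}:\sum_{i\ge1}\mathbf{s}_i<\infty\}$, $\overline{\mathcal{V}}^\infty=\{\mathbf{v}:\mathbf{v}_i=\sum_{j\ge i}\mathbf{s}_j\ \forall i,\text{ for some }\mathbf{s}\in\overline{\mathcal{S}}^\infty\}$; $\|\mathbf{x}\|_w^2=\sum_{i\ge0}2^{-i}\mathbf{x}_i^2$. $g_i(\mathbf{v})=p$ if $\mathbf{v}_i>0$, $=\min\{\lambda\mathbf{v}_{i-1},p\}$ if $\mathbf{v}_i=0<\mathbf{v}_{i-1}$, $=0$ if $\mathbf{v}_i=\mathbf{v}_{i-1}=0$. A solution to the fluid model with initial condition $\mathbf{v}^0$ is $\mathbf{v}:[0,\infty)\to\overline{\mathcal{V}}^\infty$ with (0) all coordinates $L$-Lipschitz for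 a common $L$; (1) $\mathbf{v}(0)=\mathbf{v}^0$; (2) for all $t$, $\mathbf{v}_0-\mathbf{v}_1=1$ and $1\ge\mathbf{v}_i-\mathbf{v}_{i+1}\ge\mathbf{v}_{i+1}-\mathbf{v}_{i+2}\ge0$, $i\ge0$; (3) for a.e. $t$ and all $i\ge1$, $\dot{\mathbf{v}}_i=\lambda(\mathbf{v}_{i-1}-\mathbf{v}_i)-(1-p)(\mathbf{v}_i-\mathbf{v}_{i+1})-g_i(\mathbf{v})$. It exists and is unique. *)

theory Defs
  imports "HOL-Analysis.Analysis"
begin

definition S_set :: "(nat \<Rightarrow> real) set" where
  "S_set = {s. s 0 = 1 \<and> (\<forall>i. 0 \<le> s i \<and> s i \<le> 1) \<and> (\<forall>i. s (Suc i) \<le> s i)}"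

definition S_fin :: "(nat \<Rightarrow> real) set" where
  "S_fin = {s \<in> S_set. summable (\<lambda>i. s (Suc i))}"

definition V_fin :: "(nat \<Rightarrow> real) set" where
  "V_fin = {v. \<exists>s \<in> S_fin. \<forall>i. v i = (\<Sum>j. s (j + i))}"

definition wnorm :: "(nat \<Rightarrow> real) \<Rightarrow> real" where
  "wnorm x = sqrt (\<Sum>i. x i ^ 2 / 2 ^ i)"

definition g_fun :: "real \<Rightarrow> real \<Rightarrow> (nat \<Rightarrow> real) \<Rightarrow> nat \<Rightarrow> real" where
  "g_fun lam p v i =
     (if v i > 0 then p
      else if v (i - 1) > 0 then min (lam * v (i - 1)) p
      else 0)"

definition fluid_solution ::
  "real \<Rightarrow> real \<Rightarrow> (nat \<Rightarrow> real) \<Rightarrow> (real \<Rightarrow> nat \<Rightarrow> real) \<Rightarrow> bool" where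
  "fluid_solution lam p v0 v \<longleftrightarrow>
     (\<forall>t \<ge> 0. v t \<in> V_fin) \<and>
     (\<exists>L. \<forall>i. \<forall>s \<ge> 0. \<forall>t \<ge> 0. \<bar>v s i - v t i\<bar> \<le> L * \<bar>s - t\<bar>) \<and>
     v 0 = v0 \<and>
     (\<forall>t \<ge> 0. v t 0 - v t 1 = 1 \<and>
        (\<forall>i. 1 \<ge> v t i - v t (i + 1) \<and>
             v t i - v t (i + 1) \<ge> v t (i + 1) - v t (i + 2) \<and>
             v t (i + 1) - v t (i + 2) \<ge> 0)) \<and>
     (AE t in lborel. t > 0 \<longrightarrow>
        (\<forall>i \<ge> 1. ((\<lambda>s. v s i) has_real_derivative
            (lam * (v t (i - 1) - v t i) - (1 - p) * (v t i - v t (i + 1))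
             - g_fun lam p (v t) i)) (at t)))"

end

theory Submission
  imports Defs
begin

(*
  For two fluid solutions a and b consider the truncated weighted energy
    F_N(t) = sum_{i<N} 2^-i (a_{i+1}(t) - b_{i+1}(t))^2.
  Since g is monotone in the coordinate it acts on, its contribution to F_N' is dissipative,
  and after shifting indices against the weights 2^-i the transport terms give
  F_N' <= 6 F_N + O(2^-N) almost everywhere, the error coming from the boundary coordinate N.
  Gronwall and N -> infinity yield ||a(t) - b(t)||_w^2 <= 3 e^(6t) ||a(0) - b(0)||_w^2,
  so the solution at time t depends continuously on the initial condition.
  The coordinates are only Lipschitz, so Gronwall is needed for Lipschitz functions whose
  derivative exists only almost everywhere; it rests on the Lusin N-property of Lipschitz maps.
*)

section \<open>Gronwall's inequality for Lipschitz functions\<close>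

lemma lipschitz_on_sum:
  fixes f :: "'i \<Rightarrow> 'a::metric_space \<Rightarrow> 'b::real_normed_vector"
  assumes "finite I" "\<And>i. i \<in> I \<Longrightarrow> (C i)-lipschitz_on U (f i)"
  shows "(\<Sum>i\<in>I. C i)-lipschitz_on U (\<lambda>x. \<Sum>i\<in>I. f i x)"
  using assms by (induction I rule: finite_induct) (auto intro!: lipschitz_intros)

lemma lipschitz_on_mult_real:
  fixes f g :: "'a::metric_space \<Rightarrow> real"
  assumes f: "A-lipschitz_on U f" and g: "B-lipschitz_on U g"
    and "0 \<le> P" "\<And>x. x \<in> U \<Longrightarrow> \<bar>f x\<bar> \<le> P"
    and "0 \<le> Q" "\<And>x. x \<in> U \<Longrightarrow> \<bar>g x\<bar> \<le> Q"
  shows "(A * Q + B * P)-lipschitz_on U (\<lambda>x. f x * g x)"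
proof (rule lipschitz_onI)
  fix x y assume x: "x \<in> U" and y: "y \<in> U"
  have "f x * g x - f y * g y = (f x - f y) * g x + f y * (g x - g y)"
    by (simp add: algebra_simps)
  hence "dist (f x * g x) (f y * g y) \<le> dist (f x) (f y) * \<bar>g x\<bar> + \<bar>f y\<bar> * dist (g x) (g y)"
    unfolding dist_real_def by (metis abs_mult abs_triangle_ineq)
  also have "\<dots> \<le> (A * dist x y) * Q + P * (B * dist x y)"
    using assms x y lipschitz_on_nonneg[OF f]
    by (intro add_mono mult_mono lipschitz_onD[OF f] lipschitz_onD[OF g]) auto
  finally show "dist (f x * g x) (f y * g y) \<le> (A * Q + B * P) * dist x y"
    by (simp add: algebra_simps)
qed (use assms lipschitz_on_nonneg[OF f] lipschitz_on_nonneg[OF g] in auto)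

lemma lipschitz_on_exp_neg:
  fixes C :: real assumes "0 \<le> C"
  shows "C-lipschitz_on {0..} (\<lambda>t. exp (- C * t))"
proof (rule bounded_derivative_imp_lipschitz)
  fix t :: real assume t: "t \<in> {0..}"
  show "((\<lambda>t. exp (- C * t)) has_derivative (\<lambda>h. h *\<^sub>R (- C * exp (- C * t)))) (at t within {0..})"
    by (auto intro!: derivative_eq_intros simp: algebra_simps)
  have "onorm (\<lambda>h. h *\<^sub>R (- C * exp (- C * t))) = C * exp (- C * t)"
    using assms by (subst onorm_scaleR_left) (auto simp: onorm_id abs_mult)
  also have "\<dots> \<le> C" using t assms by (intro mult_left_le) auto
  finally show "onorm (\<lambda>h. h *\<^sub>R (- C * exp (- C * t))) \<le> C" .
qed (use assms in auto)

lemma lipschitz_increase_imp_right_increasing_point: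
  fixes G :: "real \<Rightarrow> real"
  assumes "a \<le> b" and lip: "M-lipschitz_on {a..b} G" and N: "negligible N" and Gab: "G a < G b"
  obtains t where "t \<in> {a<..<b}" "t \<notin> N" "\<And>d. 0 < d \<Longrightarrow> \<exists>h. 0 < h \<and> h < d \<and> G t < G (t + h)"
proof -
  have cont: "continuous_on {a..b} G" using lip by (rule lipschitz_on_continuous_on)
  define N' where "N' = (N \<union> {a, b}) \<inter> {a..b}"
  have "negligible (G ` N')"
  proof (rule negligible_locally_Lipschitz_image)
    show "negligible N'" unfolding N'_def by (rule negligible_Int) (use N in auto)
    fix s assume s: "s \<in> N'"
    show "\<exists>T B. open T \<and> s \<in> T \<and> (\<forall>r\<in>N' \<inter> T. norm (G r - G s) \<le> B * norm (r - s))"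
    proof (intro exI[of _ UNIV] exI[of _ M] conjI ballI)
      fix r assume "r \<in> N' \<inter> UNIV"
      with s have "r \<in> {a..b}" "s \<in> {a..b}" by (auto simp: N'_def)
      then show "norm (G r - G s) \<le> M * norm (r - s)"
        using lipschitz_onD[OF lip] by (simp add: dist_real_def)
    qed auto
  qed simp
  moreover have "\<not> negligible {G a<..<G b}" using negligible_interval(2)[of "G a" "G b"] Gab by simp
  ultimately obtain y where y: "y \<in> {G a<..<G b}" "y \<notin> G ` N'"
    by (metis negligible_subset subsetI)
  \<comment> \<open>the last time at which G is below the level y, which G only crosses outside N\<close>
  define S where "S = {a..b} \<inter> G -` {..y}"
  define t where "t = Sup S"
  have "a \<in> S" using y \<open>a \<le> b\<close> by (simp add: S_def)
  moreover have "closed S" unfolding S_def using continuous_closed_preimage[OF cont] by simp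
  ultimately have "t \<in> S" unfolding t_def by (intro closed_contains_Sup) (auto simp: S_def)
  hence t: "a \<le> t" "t \<le> b" "G t \<le> y" by (auto simp: S_def)
  have above: "G r > y" if "t < r" "r \<le> b" for r
    using cSup_upper[of r S] that t by (force simp: S_def t_def)
  have "t < b" using t y by (cases "t = b") auto
  with t have "G t = y"
    using IVT'[of G t y b] continuous_on_subset[OF cont, of "{t..b}"] y above
    by (fastforce simp: less_eq_real_def)
  hence "t \<noteq> a" "t \<notin> N" using y t by (auto simp: N'_def)
  show thesis
  proof (rule that)
    show "t \<in> {a<..<b}" using t \<open>t \<noteq> a\<close> \<open>t < b\<close> by simp
    show "t \<notin> N" by fact
    fix d :: real assume "0 < d"
    define h where "h = min (d / 2) ((b - t) / 2)"
    have "0 < h" "h < d" "t + h \<le> b" using \<open>0 < d\<close> \<open>t < b\<close> by (auto simp: h_def min_def field_simps)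
    then show "\<exists>h. 0 < h \<and> h < d \<and> G t < G (t + h)"
      using above[of "t + h"] \<open>G t = y\<close> by auto
  qed
qed

lemma lipschitz_deriv_nonpos_ae_imp_le:
  fixes F :: "real \<Rightarrow> real"
  assumes "a \<le> b" and lip: "M-lipschitz_on {a..b} F"
    and deriv: "AE t in lborel. t \<in> {a<..<b} \<longrightarrow> (\<exists>D. (F has_real_derivative D) (at t) \<and> D \<le> 0)"
  shows "F b \<le> F a"
proof (rule ccontr)
  assume "\<not> F b \<le> F a"
  hence Fab: "F a < F b" by simp
  with \<open>a \<le> b\<close> have "a < b" by (cases "a = b") auto
  obtain N where N: "negligible N"
    and "{t. \<not> (t \<in> {a<..<b} \<longrightarrow> (\<exists>D. (F has_real_derivative D) (at t) \<and> D \<le> 0))} \<subseteq> N"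
    using AE_completion[OF deriv] by (auto simp: eventually_ae_filter_negligible)
  hence derivN: "\<exists>D. (F has_real_derivative D) (at t) \<and> D \<le> 0" if "t \<in> {a<..<b}" "t \<notin> N" for t
    using that by blast
  \<comment> \<open>tilt F so that it still increases from a to b but has derivative < 0 wherever F' \<le> 0\<close>
  define e where "e = (F b - F a) / (2 * (b - a))"
  define G where "G t = F t - e * (t - a)" for t
  have e: "0 < e" "e * (b - a) = (F b - F a) / 2"
    using Fab \<open>a < b\<close> by (simp_all add: e_def field_simps)
  have "(M + e * (1 + 0))-lipschitz_on {a..b} G"
    unfolding G_def using lip e by (intro lipschitz_intros) auto
  moreover have "G a < G b" using Fab e by (simp add: G_def)
  ultimately obtain t where t: "t \<in> {a<..<b}" "t \<notin> N"
    and incr: "\<And>d. 0 < d \<Longrightarrow> \<exists>h. 0 < h \<and> h < d \<and> G t < G (t + h)"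
    using lipschitz_increase_imp_right_increasing_point \<open>a \<le> b\<close> N by metis
  obtain D where D: "(F has_real_derivative D) (at t)" "D \<le> 0" using derivN[OF t] by blast
  have "(G has_real_derivative D - e) (at t)"
    unfolding G_def by (auto intro!: derivative_eq_intros D(1))
  moreover have "D - e < 0" using D e by simp
  ultimately obtain d where "0 < d" "\<And>h. 0 < h \<Longrightarrow> h < d \<Longrightarrow> G (t + h) < G t"
    using DERIV_neg_dec_right by blast
  with incr[of d] show False by force
qed

lemma gronwall_lipschitz_ae:
  fixes F :: "real \<Rightarrow> real"
  assumes T: "0 \<le> T" and C: "0 < C" and lip: "M-lipschitz_on {0..T} F"
    and deriv: "AE t in lborel. t \<in> {0<..<T} \<longrightarrow> (\<exists>D. (F has_real_derivative D) (at t) \<and> D \<le> C * F t + K)"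
  shows "F T + K / C \<le> exp (C * T) * (F 0 + K / C)"
proof -
  define H where "H t = exp (- C * t) * (F t + K / C)" for t
  define R where "R = \<bar>F 0\<bar> + M * T + \<bar>K / C\<bar>"
  have bound: "\<bar>F t + K / C\<bar> \<le> R" if "t \<in> {0..T}" for t
  proof -
    have "\<bar>F t - F 0\<bar> \<le> M * T"
      using lipschitz_onD[OF lip that, of 0] that T mult_left_mono[of t T M] lipschitz_on_nonneg[OF lip]
      by (simp add: dist_real_def)
    then show ?thesis unfolding R_def by linarith
  qed
  have "C-lipschitz_on {0..T} (\<lambda>t. exp (- C * t))"
    using C by (intro lipschitz_on_subset[OF lipschitz_on_exp_neg]) auto
  moreover have "(M + 0)-lipschitz_on {0..T} (\<lambda>t. F t + K / C)"
    using lip by (intro lipschitz_intros)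
  ultimately have "(C * R + (M + 0) * 1)-lipschitz_on {0..T} H"
    unfolding H_def
  proof (rule lipschitz_on_mult_real)
    show "0 \<le> R" using bound[of 0] T by force
  qed (use bound C in auto)
  moreover have "AE t in lborel. t \<in> {0<..<T} \<longrightarrow> (\<exists>D. (H has_real_derivative D) (at t) \<and> D \<le> 0)"
    using deriv
  proof eventually_elim
    case (elim t)
    show ?case
    proof
      assume "t \<in> {0<..<T}"
      then obtain D where D: "(F has_real_derivative D) (at t)" "D \<le> C * F t + K"
        using elim by blast
      have "(H has_real_derivative - C * exp (- C * t) * (F t + K / C) + exp (- C * t) * D) (at t)"
        unfolding H_def by (auto intro!: derivative_eq_intros D(1))
      moreover have "- C * exp (- C * t) * (F t + K / C) + exp (- C * t) * D
          = exp (- C * t) * (D - C * F t - K)"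
        using C by (simp add: algebra_simps)
      moreover have "exp (- C * t) * (D - C * F t - K) \<le> 0"
        using D(2) by (intro mult_nonneg_nonpos) auto
      ultimately show "\<exists>D. (H has_real_derivative D) (at t) \<and> D \<le> 0" by auto
    qed
  qed
  ultimately have "H T \<le> H 0" by (rule lipschitz_deriv_nonpos_ae_imp_le[OF T])
  hence "exp (C * T) * H T \<le> exp (C * T) * (F 0 + K / C)" by (simp add: H_def)
  moreover have "exp (C * T) * H T = F T + K / C"
    by (simp add: H_def mult.assoc[symmetric] flip: exp_add)
  ultimately show ?thesis by simp
qed

section \<open>Weighted sums of squares\<close>

lemma summable_weighted_square_if_bounded:
  fixes f :: "nat \<Rightarrow> real" assumes "\<And>i. \<bar>f i\<bar> \<le> B"
  shows "summable (\<lambda>i. f i ^ 2 / 2 ^ i)"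
proof (rule summable_comparison_test)
  show "summable (\<lambda>i. B ^ 2 * (1 / 2) ^ i)" by (intro summable_mult summable_geometric) simp
  have "f i ^ 2 \<le> B ^ 2" for i
    using power_mono[OF assms[of i], of 2] by simp
  then show "\<exists>N. \<forall>i\<ge>N. norm (f i ^ 2 / 2 ^ i) \<le> B ^ 2 * (1 / 2) ^ i"
    by (simp add: power_divide divide_right_mono)
qed

lemma wnorm_power2_eq_head_tail:
  fixes z :: "nat \<Rightarrow> real"
  assumes "summable (\<lambda>i. z i ^ 2 / 2 ^ i)"
  shows "wnorm z ^ 2 = z 0 ^ 2 + (\<Sum>i. z (Suc i) ^ 2 / 2 ^ i) / 2"
proof -
  have tail: "(\<lambda>i. z (Suc i) ^ 2 / 2 ^ Suc i) = (\<lambda>i. (z (Suc i) ^ 2 / 2 ^ i) / 2)"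
    by (simp add: mult.commute)
  have "summable (\<lambda>i. (z (Suc i) ^ 2 / 2 ^ i) / 2)"
    using assms by (subst tail[symmetric]) (rule summable_Suc_iff[THEN iffD2])
  from summable_mult[OF this, of 2] have "summable (\<lambda>i. z (Suc i) ^ 2 / 2 ^ i)" by simp
  have "(\<Sum>i. z i ^ 2 / 2 ^ i) = z 0 ^ 2 + (\<Sum>i. z (Suc i) ^ 2 / 2 ^ Suc i)"
    using suminf_split_head[OF assms] by simp
  also have "(\<Sum>i. z (Suc i) ^ 2 / 2 ^ Suc i) = (\<Sum>i. z (Suc i) ^ 2 / 2 ^ i) / 2"
    unfolding tail by (rule suminf_divide) fact
  moreover have "0 \<le> (\<Sum>i. z i ^ 2 / 2 ^ i)" using assms by (rule suminf_nonneg) simp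
  ultimately show ?thesis by (simp add: wnorm_def)
qed

lemma weighted_sum_shift_right_le:
  fixes f :: "nat \<Rightarrow> real" assumes "\<And>i. 0 \<le> f i"
  shows "(\<Sum>i<N. f (i - 1) / 2 ^ i) \<le> 2 * (\<Sum>i<N. f i / 2 ^ i)"
proof (cases N)
  case (Suc M)
  have "(\<Sum>i<Suc M. f (i - 1) / 2 ^ i) = f 0 + (\<Sum>i<M. f i / 2 ^ i) / 2"
    by (subst sum.lessThan_Suc_shift) (simp add: sum_divide_distrib mult.commute)
  moreover have "(\<Sum>i<M. f i / 2 ^ i) \<le> (\<Sum>i<Suc M. f i / 2 ^ i)"
    using assms by simp
  moreover have "f 0 \<le> (\<Sum>i<Suc M. f i / 2 ^ i)"
    unfolding sum.lessThan_Suc_shift using assms by (simp add: sum_nonneg)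
  moreover have "0 \<le> (\<Sum>i<M. f i / 2 ^ i)" using assms by (simp add: sum_nonneg)
  ultimately show ?thesis unfolding Suc by linarith
qed simp

lemma weighted_sum_shift_left_le:
  fixes f :: "nat \<Rightarrow> real" assumes "0 \<le> f 0"
  shows "(\<Sum>i<N. f (i + 1) / 2 ^ i) \<le> 2 * (\<Sum>i<N. f i / 2 ^ i) + 2 * (f N / 2 ^ N)"
proof -
  have "(\<Sum>i<Suc N. f i / 2 ^ i) = f 0 + (\<Sum>i<N. f (i + 1) / 2 ^ i) / 2"
    by (subst sum.lessThan_Suc_shift) (simp add: sum_divide_distrib mult.commute)
  thus ?thesis using assms by simp
qed

lemma weighted_energy_inequality:
  fixes e G :: "nat \<Rightarrow> real" and l q :: real
  assumes l: "0 \<le> l" "l \<le> 1" and q: "0 \<le> q" "q \<le> 1" and G: "\<And>i. 0 \<le> e i * G i"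
  shows "(\<Sum>i<N. 2 * e i * (l * (e (i - 1) - e i) - q * (e i - e (i + 1)) - G i) / 2 ^ i)
         \<le> 6 * (\<Sum>i<N. e i ^ 2 / 2 ^ i) + 2 * (e N ^ 2 / 2 ^ N)"
proof -
  have termwise: "2 * e i * (l * (e (i - 1) - e i) - q * (e i - e (i + 1)) - G i)
      \<le> 2 * e i ^ 2 + e (i - 1) ^ 2 + e (i + 1) ^ 2" for i
  proof -
    let ?z = "e i" and ?w = "e (i - 1)" and ?u = "e (i + 1)"
    have "l * (2 * ?z * ?w) \<le> l * (?z\<^sup>2 + ?w\<^sup>2)"
      using mult_left_mono[OF sum_squares_bound[of ?z ?w] l(1)] by (simp add: power2_eq_square)
    moreover have "l * (?z\<^sup>2 + ?w\<^sup>2) \<le> ?z\<^sup>2 + ?w\<^sup>2" using l by (intro mult_left_le_one_le) auto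
    moreover have "q * (2 * ?z * ?u) \<le> q * (?z\<^sup>2 + ?u\<^sup>2)"
      using mult_left_mono[OF sum_squares_bound[of ?z ?u] q(1)] by (simp add: power2_eq_square)
    moreover have "q * (?z\<^sup>2 + ?u\<^sup>2) \<le> ?z\<^sup>2 + ?u\<^sup>2" using q by (intro mult_left_le_one_le) auto
    moreover have "0 \<le> l * ?z\<^sup>2" "0 \<le> q * ?z\<^sup>2" using l q by auto
    moreover have "2 * ?z * (l * (?w - ?z) - q * (?z - ?u) - G i) =
        l * (2 * ?z * ?w) - 2 * (l * ?z\<^sup>2) - 2 * (q * ?z\<^sup>2) + q * (2 * ?z * ?u) - 2 * (?z * G i)"
      by (simp add: algebra_simps power2_eq_square)
    ultimately show ?thesis using G[of i] by linarith
  qed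
  have "(\<Sum>i<N. 2 * e i * (l * (e (i - 1) - e i) - q * (e i - e (i + 1)) - G i) / 2 ^ i)
      \<le> (\<Sum>i<N. (2 * e i ^ 2 + e (i - 1) ^ 2 + e (i + 1) ^ 2) / 2 ^ i)"
    by (intro sum_mono divide_right_mono termwise) simp
  also have "\<dots> = 2 * (\<Sum>i<N. e i ^ 2 / 2 ^ i) + (\<Sum>i<N. e (i - 1) ^ 2 / 2 ^ i)
      + (\<Sum>i<N. e (i + 1) ^ 2 / 2 ^ i)"
    by (simp add: add_divide_distrib sum.distrib sum_distrib_left)
  also have "\<dots> \<le> 6 * (\<Sum>i<N. e i ^ 2 / 2 ^ i) + 2 * (e N ^ 2 / 2 ^ N)"
    using weighted_sum_shift_right_le[of "\<lambda>i. e i ^ 2" N]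
      weighted_sum_shift_left_le[of "\<lambda>i. e i ^ 2" N] by simp
  finally show ?thesis .
qed

section \<open>Fluid solutions\<close>

lemma V_fin_nonneg: "v \<in> V_fin \<Longrightarrow> 0 \<le> v i"
proof -
  assume "v \<in> V_fin"
  then obtain s where s: "s \<in> S_fin" and v: "\<And>i. v i = (\<Sum>j. s (j + i))"
    by (auto simp: V_fin_def)
  from s have "summable (\<lambda>j. s (Suc j))" and "\<And>j. 0 \<le> s j"
    by (auto simp: S_fin_def S_set_def)
  moreover from this(1) have "summable (\<lambda>j. s (j + i))"
    by (metis summable_Suc_iff summable_iff_shift)
  ultimately show "0 \<le> v i" by (simp add: v suminf_nonneg)
qed

lemma g_fun_diff_mono:
  assumes "0 \<le> p" "0 \<le> v i" "0 \<le> w i"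
  shows "0 \<le> (v i - w i) * (g_fun lam p v i - g_fun lam p w i)"
proof -
  have le_p: "g_fun lam p u i \<le> p" for u using assms(1) by (auto simp: g_fun_def)
  have pos: "g_fun lam p u i = p" if "0 < u i" for u using that by (simp add: g_fun_def)
  consider "0 < v i" "0 < w i" | "0 < v i" "w i = 0" | "v i = 0" "0 < w i" | "v i = 0" "w i = 0"
    using assms by fastforce
  then show ?thesis
  proof cases
    case 2 thus ?thesis using pos[of v] le_p[of w] by (intro mult_nonneg_nonneg) auto
  next
    case 3 thus ?thesis using pos[of w] le_p[of v] by (intro mult_nonpos_nonpos) auto
  qed (simp_all add: pos)
qed

lemma fluid_solution_initial: "fluid_solution lam p x a \<Longrightarrow> a 0 = x"
  by (simp add: fluid_solution_def)

lemma fluid_solution_nonneg: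
  "fluid_solution lam p x a \<Longrightarrow> 0 \<le> t \<Longrightarrow> 0 \<le> a t i"
  by (auto simp: fluid_solution_def intro: V_fin_nonneg)

lemma fluid_solution_head:
  "fluid_solution lam p x a \<Longrightarrow> 0 \<le> t \<Longrightarrow> a t 0 = a t 1 + 1"
  by (auto simp: fluid_solution_def)

lemma fluid_solution_le_first:
  assumes "fluid_solution lam p x a" "0 \<le> t"
  shows "a t (Suc i) \<le> a t 1"
proof (induction i)
  case (Suc i)
  have "a t (i + 2) \<le> a t (i + 1)" using assms by (auto simp: fluid_solution_def)
  with Suc show ?case by simp
qed simp

lemma fluid_solution_lipschitz:
  assumes "fluid_solution lam p x a"
  obtains L where "\<And>i. L-lipschitz_on {0..} (\<lambda>t. a t i)"
proof -
  obtain L where L: "\<forall>i. \<forall>s\<ge>0. \<forall>t\<ge>0. \<bar>a s i - a t i\<bar> \<le> L * \<bar>s - t\<bar>"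
    using assms unfolding fluid_solution_def by blast
  have "(max L 0)-lipschitz_on {0..} (\<lambda>t. a t i)" for i
  proof (rule lipschitz_onI)
    fix s t :: real assume "s \<in> {0..}" "t \<in> {0..}"
    then have "\<bar>a s i - a t i\<bar> \<le> L * \<bar>s - t\<bar>" using L by auto
    also have "\<dots> \<le> max L 0 * \<bar>s - t\<bar>" by (intro mult_right_mono) auto
    finally show "dist (a s i) (a t i) \<le> max L 0 * dist s t" by (simp add: dist_real_def)
  qed simp
  then show thesis by (rule that)
qed

lemma fluid_solution_deriv_ae:
  assumes "fluid_solution lam p x a"
  shows "AE t in lborel. 0 < t \<longrightarrow> (\<forall>k. ((\<lambda>s. a s (Suc k)) has_real_derivative
     lam * (a t k - a t (Suc k)) - (1 - p) * (a t (Suc k) - a t (Suc (Suc k)))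
      - g_fun lam p (a t) (Suc k)) (at t))"
proof -
  have "AE t in lborel. 0 < t \<longrightarrow> (\<forall>i \<ge> 1. ((\<lambda>s. a s i) has_real_derivative
      lam * (a t (i - 1) - a t i) - (1 - p) * (a t i - a t (i + 1)) - g_fun lam p (a t) i) (at t))"
    using assms unfolding fluid_solution_def by blast
  then show ?thesis
  proof eventually_elim
    case (elim t)
    show ?case
    proof (intro impI allI)
      fix k assume "0 < t"
      with elim have "1 \<le> Suc k \<longrightarrow> ((\<lambda>s. a s (Suc k)) has_real_derivative lam * (a t (Suc k - 1) - a t (Suc k))
          - (1 - p) * (a t (Suc k) - a t (Suc k + 1)) - g_fun lam p (a t) (Suc k)) (at t)"
        by blast
      then show "((\<lambda>s. a s (Suc k)) has_real_derivative lam * (a t k - a t (Suc k))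
          - (1 - p) * (a t (Suc k) - a t (Suc (Suc k))) - g_fun lam p (a t) (Suc k)) (at t)"
        by simp
    qed
  qed
qed

section \<open>Stability with respect to the initial condition\<close>

context
  fixes lam p :: real and x y :: "nat \<Rightarrow> real" and a b :: "real \<Rightarrow> nat \<Rightarrow> real"
  assumes lam: "0 \<le> lam" "lam \<le> 1" and p: "0 \<le> p" "p \<le> 1"
    and sol_a: "fluid_solution lam p x a" and sol_b: "fluid_solution lam p y b"
begin

lemma tail_diff_bounded:
  obtains B where "\<And>t i. t \<in> {0..T} \<Longrightarrow> \<bar>a t (Suc i) - b t (Suc i)\<bar> \<le> B"
proof -
  obtain La Lb where La: "La-lipschitz_on {0..} (\<lambda>t. a t 1)" and Lb: "Lb-lipschitz_on {0..} (\<lambda>t. b t 1)"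
    using fluid_solution_lipschitz sol_a sol_b by metis
  have "\<bar>a t (Suc i) - b t (Suc i)\<bar> \<le> \<bar>a 0 1\<bar> + \<bar>b 0 1\<bar> + (La + Lb) * T" if t: "t \<in> {0..T}" for t i
  proof -
    have "La * t \<le> La * T" "Lb * t \<le> Lb * T"
      using t lipschitz_on_nonneg[OF La] lipschitz_on_nonneg[OF Lb] by (auto intro: mult_left_mono)
    moreover have "\<bar>a t 1 - a 0 1\<bar> \<le> La * t" "\<bar>b t 1 - b 0 1\<bar> \<le> Lb * t"
      using t lipschitz_onD[OF La, of t 0] lipschitz_onD[OF Lb, of t 0] by (auto simp: dist_real_def)
    moreover have "0 \<le> a t (Suc i)" "a t (Suc i) \<le> a t 1" "0 \<le> b t (Suc i)" "b t (Suc i) \<le> b t 1"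
      using t fluid_solution_nonneg[OF sol_a] fluid_solution_le_first[OF sol_a]
        fluid_solution_nonneg[OF sol_b] fluid_solution_le_first[OF sol_b] by auto
    ultimately have "a t (Suc i) \<le> \<bar>a 0 1\<bar> + La * T" "b t (Suc i) \<le> \<bar>b 0 1\<bar> + Lb * T"
      by (simp_all add: abs_le_iff) linarith+
    with \<open>0 \<le> a t (Suc i)\<close> \<open>0 \<le> b t (Suc i)\<close> show ?thesis
      by (simp add: abs_le_iff algebra_simps)
  qed
  then show thesis by (rule that)
qed

lemma truncated_energy_lipschitz:
  assumes S: "S \<subseteq> {0..}" and B: "\<And>t i. t \<in> S \<Longrightarrow> \<bar>a t (Suc i) - b t (Suc i)\<bar> \<le> B"
  obtains M where "M-lipschitz_on S (\<lambda>t. \<Sum>i<N. (a t (Suc i) - b t (Suc i)) ^ 2 / 2 ^ i)"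
proof -
  obtain La Lb where La: "\<And>i. La-lipschitz_on {0..} (\<lambda>t. a t i)" and Lb: "\<And>i. Lb-lipschitz_on {0..} (\<lambda>t. b t i)"
    using fluid_solution_lipschitz sol_a sol_b by metis
  define L where "L = La + Lb"
  have diff: "L-lipschitz_on S (\<lambda>t. a t (Suc i) - b t (Suc i))" for i
    unfolding L_def using S by (intro lipschitz_intros lipschitz_on_subset[OF La] lipschitz_on_subset[OF Lb])
  have "\<bar>a t (Suc i) - b t (Suc i)\<bar> \<le> \<bar>B\<bar>" if "t \<in> S" for t i
    using B[OF that, of i] by linarith
  then have "(L * \<bar>B\<bar> + L * \<bar>B\<bar>)-lipschitz_on S (\<lambda>t. (a t (Suc i) - b t (Suc i)) * (a t (Suc i) - b t (Suc i)))" for i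
    by (intro lipschitz_on_mult_real diff) auto
  then have "((1 / 2 ^ i) * (L * \<bar>B\<bar> + L * \<bar>B\<bar>))-lipschitz_on S
      (\<lambda>t. (1 / 2 ^ i) * ((a t (Suc i) - b t (Suc i)) * (a t (Suc i) - b t (Suc i))))" for i
    by (intro lipschitz_on_cmult_real_nonneg) auto
  then have "(\<Sum>i<N. (1 / 2 ^ i) * (L * \<bar>B\<bar> + L * \<bar>B\<bar>))-lipschitz_on S
      (\<lambda>t. \<Sum>i<N. (1 / 2 ^ i) * ((a t (Suc i) - b t (Suc i)) * (a t (Suc i) - b t (Suc i))))"
    by (intro lipschitz_on_sum) auto
  then show thesis by (intro that) (simp add: power2_eq_square)
qed

lemma tail_diff_deriv_ae:
  "AE t in lborel. 0 < t \<longrightarrow> (\<forall>k. ((\<lambda>s. a s (Suc k) - b s (Suc k)) has_real_derivative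
     lam * ((a t (Suc (k - 1)) - b t (Suc (k - 1))) - (a t (Suc k) - b t (Suc k)))
     - (1 - p) * ((a t (Suc k) - b t (Suc k)) - (a t (Suc (k + 1)) - b t (Suc (k + 1))))
     - (g_fun lam p (a t) (Suc k) - g_fun lam p (b t) (Suc k))) (at t))"
  using fluid_solution_deriv_ae[OF sol_a] fluid_solution_deriv_ae[OF sol_b]
proof eventually_elim
  case (elim t)
  show ?case
  proof (intro impI allI)
    fix k assume t: "0 < t"
    \<comment> \<open>coordinate 0 is 1 plus coordinate 1, so the differences of coordinates 0 and 1 agree\<close>
    have shift: "a t k - b t k = a t (Suc (k - 1)) - b t (Suc (k - 1))"
      using fluid_solution_head[OF sol_a, of t] fluid_solution_head[OF sol_b, of t] t by (cases k) auto
    have "((\<lambda>s. a s (Suc k) - b s (Suc k)) has_real_derivative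
        (lam * (a t k - a t (Suc k)) - (1 - p) * (a t (Suc k) - a t (Suc (Suc k))) - g_fun lam p (a t) (Suc k))
      - (lam * (b t k - b t (Suc k)) - (1 - p) * (b t (Suc k) - b t (Suc (Suc k))) - g_fun lam p (b t) (Suc k)))
      (at t)"
      using elim t by (intro DERIV_diff) auto
    moreover have "(lam * (a t k - a t (Suc k)) - (1 - p) * (a t (Suc k) - a t (Suc (Suc k))) - g_fun lam p (a t) (Suc k))
      - (lam * (b t k - b t (Suc k)) - (1 - p) * (b t (Suc k) - b t (Suc (Suc k))) - g_fun lam p (b t) (Suc k))
      = lam * ((a t k - b t k) - (a t (Suc k) - b t (Suc k)))
        - (1 - p) * ((a t (Suc k) - b t (Suc k)) - (a t (Suc (k + 1)) - b t (Suc (k + 1))))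
        - (g_fun lam p (a t) (Suc k) - g_fun lam p (b t) (Suc k))"
      by (simp add: algebra_simps)
    ultimately show "((\<lambda>s. a s (Suc k) - b s (Suc k)) has_real_derivative
     lam * ((a t (Suc (k - 1)) - b t (Suc (k - 1))) - (a t (Suc k) - b t (Suc k)))
     - (1 - p) * ((a t (Suc k) - b t (Suc k)) - (a t (Suc (k + 1)) - b t (Suc (k + 1))))
     - (g_fun lam p (a t) (Suc k) - g_fun lam p (b t) (Suc k))) (at t)"
      by (simp only: shift)
  qed
qed

lemma truncated_energy_deriv_ae:
  "AE t in lborel. 0 < t \<longrightarrow>
     (\<exists>D. ((\<lambda>s. \<Sum>i<N. (a s (Suc i) - b s (Suc i)) ^ 2 / 2 ^ i) has_real_derivative D) (at t) \<and>
          D \<le> 6 * (\<Sum>i<N. (a t (Suc i) - b t (Suc i)) ^ 2 / 2 ^ i)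
               + 2 * ((a t (Suc N) - b t (Suc N)) ^ 2 / 2 ^ N))"
  using tail_diff_deriv_ae
proof eventually_elim
  case (elim t)
  show ?case
  proof
    assume t: "0 < t"
    define e where "e i = a t (Suc i) - b t (Suc i)" for i
    define G where "G i = g_fun lam p (a t) (Suc i) - g_fun lam p (b t) (Suc i)" for i
    define E where "E i = lam * (e (i - 1) - e i) - (1 - p) * (e i - e (i + 1)) - G i" for i
    have "((\<lambda>s. (a s (Suc i) - b s (Suc i)) ^ 2 / 2 ^ i) has_real_derivative 2 * e i * E i / 2 ^ i) (at t)" for i
    proof -
      have "((\<lambda>s. a s (Suc i) - b s (Suc i)) has_real_derivative E i) (at t)"
        using elim t by (simp add: E_def e_def G_def)
      from DERIV_cdivide[OF DERIV_power[OF this, of 2], of "2 ^ i"] show ?thesis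
        by (simp add: e_def mult_ac)
    qed
    then have "((\<lambda>s. \<Sum>i<N. (a s (Suc i) - b s (Suc i)) ^ 2 / 2 ^ i) has_real_derivative
        (\<Sum>i<N. 2 * e i * E i / 2 ^ i)) (at t)"
      by (rule DERIV_sum)
    moreover have "(\<Sum>i<N. 2 * e i * E i / 2 ^ i) \<le> 6 * (\<Sum>i<N. e i ^ 2 / 2 ^ i) + 2 * (e N ^ 2 / 2 ^ N)"
      unfolding E_def
    proof (rule weighted_energy_inequality)
      show "0 \<le> e i * G i" for i
        using g_fun_diff_mono[OF p(1), of "a t" "Suc i" "b t" lam] t
          fluid_solution_nonneg[OF sol_a] fluid_solution_nonneg[OF sol_b]
        by (simp add: e_def G_def)
    qed (use lam p in auto)
    ultimately show "\<exists>D. ((\<lambda>s. \<Sum>i<N. (a s (Suc i) - b s (Suc i)) ^ 2 / 2 ^ i) has_real_derivative D) (at t) \<and>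
        D \<le> 6 * (\<Sum>i<N. (a t (Suc i) - b t (Suc i)) ^ 2 / 2 ^ i) + 2 * ((a t (Suc N) - b t (Suc N)) ^ 2 / 2 ^ N)"
      unfolding e_def by blast
  qed
qed

lemma truncated_energy_gronwall:
  assumes T: "0 \<le> T" and B: "\<And>t i. t \<in> {0..T} \<Longrightarrow> \<bar>a t (Suc i) - b t (Suc i)\<bar> \<le> B"
  shows "(\<Sum>i<N. (a T (Suc i) - b T (Suc i)) ^ 2 / 2 ^ i)
    \<le> exp (6 * T) * ((\<Sum>i<N. (x (Suc i) - y (Suc i)) ^ 2 / 2 ^ i) + B ^ 2 / (3 * 2 ^ N))"
proof -
  define F where "F t = (\<Sum>i<N. (a t (Suc i) - b t (Suc i)) ^ 2 / 2 ^ i)" for t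
  define K :: real where "K = 2 * B ^ 2 / 2 ^ N"
  obtain M where "M-lipschitz_on {0..T} F"
    using truncated_energy_lipschitz[of "{0..T}" B N] B unfolding F_def by auto
  moreover have "AE t in lborel. t \<in> {0<..<T} \<longrightarrow> (\<exists>D. (F has_real_derivative D) (at t) \<and> D \<le> 6 * F t + K)"
    using truncated_energy_deriv_ae[of N]
  proof eventually_elim
    case (elim t)
    show ?case
    proof
      assume t: "t \<in> {0<..<T}"
      have "(a t (Suc N) - b t (Suc N)) ^ 2 \<le> B ^ 2"
        using power_mono[OF B[of t N], of 2] t by simp
      then have "2 * ((a t (Suc N) - b t (Suc N)) ^ 2 / 2 ^ N) \<le> K"
        by (simp add: K_def divide_right_mono)
      with elim t show "\<exists>D. (F has_real_derivative D) (at t) \<and> D \<le> 6 * F t + K"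
        unfolding F_def[abs_def] by force
    qed
  qed
  ultimately have "F T + K / 6 \<le> exp (6 * T) * (F 0 + K / 6)"
    using gronwall_lipschitz_ae[of T 6 M F K] T by simp
  moreover have "0 \<le> K / 6" by (simp add: K_def)
  ultimately have "F T \<le> exp (6 * T) * (F 0 + K / 6)" by linarith
  then show ?thesis
    by (simp add: F_def K_def fluid_solution_initial[OF sol_a] fluid_solution_initial[OF sol_b])
qed

lemma wnorm_diff_le_exp:
  assumes T: "0 \<le> T"
  shows "wnorm (\<lambda>i. a T i - b T i) ^ 2 \<le> 3 * exp (6 * T) * wnorm (\<lambda>i. x i - y i) ^ 2"
proof -
  obtain B where B: "\<And>t i. t \<in> {0..T} \<Longrightarrow> \<bar>a t (Suc i) - b t (Suc i)\<bar> \<le> B"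
    using tail_diff_bounded by blast
  define S where "S t = (\<Sum>i. (a t (Suc i) - b t (Suc i)) ^ 2 / 2 ^ i)" for t
  have summable: "summable (\<lambda>i. (a t (Suc i) - b t (Suc i)) ^ 2 / 2 ^ i)" if "t \<in> {0..T}" for t
    using B[OF that] by (rule summable_weighted_square_if_bounded)
  have wnorm_eq: "wnorm (\<lambda>i. a t i - b t i) ^ 2 = (a t 1 - b t 1) ^ 2 + S t / 2" if t: "t \<in> {0..T}" for t
  proof -
    have head: "a t 0 - b t 0 = a t 1 - b t 1"
      using t fluid_solution_head[OF sol_a, of t] fluid_solution_head[OF sol_b, of t] by simp
    have "\<bar>a t i - b t i\<bar> \<le> B" for i
      using B[OF t, of "i - 1"] head by (cases i) auto
    then have "summable (\<lambda>i. (a t i - b t i) ^ 2 / 2 ^ i)"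
      by (rule summable_weighted_square_if_bounded)
    from wnorm_power2_eq_head_tail[OF this] head show ?thesis by (simp add: S_def)
  qed
  have "(\<Sum>i<N. (a T (Suc i) - b T (Suc i)) ^ 2 / 2 ^ i) \<le> exp (6 * T) * (S 0 + B ^ 2 / (3 * 2 ^ N))" for N
    using truncated_energy_gronwall[OF T B, of N] sum_le_suminf[OF summable[of 0], of "{..<N}"] T
    unfolding fluid_solution_initial[OF sol_a, symmetric] fluid_solution_initial[OF sol_b, symmetric] S_def
    by (simp add: order_trans)
  moreover have "(\<lambda>N. \<Sum>i<N. (a T (Suc i) - b T (Suc i)) ^ 2 / 2 ^ i) \<longlonglongrightarrow> S T"
    unfolding S_def using summable T by (intro summable_LIMSEQ) auto
  moreover have "(\<lambda>N. exp (6 * T) * (S 0 + B ^ 2 / (3 * 2 ^ N))) \<longlonglongrightarrow> exp (6 * T) * (S 0 + 0)"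
    using LIMSEQ_divide_realpow_zero[of 2 "B ^ 2 / 3"] by (intro tendsto_intros) simp
  ultimately have "S T \<le> exp (6 * T) * S 0"
    using LIMSEQ_le by fastforce
  moreover have "(a T 1 - b T 1) ^ 2 \<le> S T"
    using sum_le_suminf[OF summable[of T], of "{..<1}"] T by (simp add: S_def)
  ultimately have "wnorm (\<lambda>i. a T i - b T i) ^ 2 \<le> 3 / 2 * (exp (6 * T) * S 0)"
    using wnorm_eq[of T] T by simp
  also have "\<dots> \<le> 3 * exp (6 * T) * ((a 0 1 - b 0 1) ^ 2 + S 0 / 2)"
    by (simp add: algebra_simps)
  also have "\<dots> = 3 * exp (6 * T) * wnorm (\<lambda>i. x i - y i) ^ 2"
    using wnorm_eq[of 0] T
    by (simp add: fluid_solution_initial[OF sol_a, symmetric] fluid_solution_initial[OF sol_b, symmetric])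
  finally show ?thesis .
qed

end

theorem corollary2:
  fixes lam p :: real
    and v0 :: "nat \<Rightarrow> real" and w :: "nat \<Rightarrow> nat \<Rightarrow> real"
    and v :: "real \<Rightarrow> nat \<Rightarrow> real" and u :: "nat \<Rightarrow> real \<Rightarrow> nat \<Rightarrow> real"
  assumes "0 \<le> lam" "lam < 1" "0 \<le> p" "p \<le> 1"
    and "v0 \<in> V_fin"
    and "\<And>n. w n \<in> V_fin"
    and "(\<lambda>n. wnorm (\<lambda>i. w n i - v0 i)) \<longlonglongrightarrow> 0"
    and "fluid_solution lam p v0 v"
    and "\<And>n. fluid_solution lam p (w n) (u n)"
  shows "\<forall>t \<ge> 0. (\<lambda>n. wnorm (\<lambda>i. u n t i - v t i)) \<longlonglongrightarrow> 0"
proof (intro allI impI)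
  fix t :: real assume t: "t \<ge> 0"
  define c where "c = sqrt (3 * exp (6 * t))"
  have bound: "\<bar>wnorm (\<lambda>i. u n t i - v t i)\<bar> \<le> c * \<bar>wnorm (\<lambda>i. w n i - v0 i)\<bar>" for n
  proof -
    have "wnorm (\<lambda>i. u n t i - v t i) ^ 2 \<le> 3 * exp (6 * t) * wnorm (\<lambda>i. w n i - v0 i) ^ 2"
      using wnorm_diff_le_exp[OF assms(1) _ assms(3,4) assms(9)[of n] assms(8) t] assms(2) by simp
    then have "sqrt (wnorm (\<lambda>i. u n t i - v t i) ^ 2) \<le> sqrt (3 * exp (6 * t) * wnorm (\<lambda>i. w n i - v0 i) ^ 2)"
      by (rule real_sqrt_le_mono)
    then show ?thesis by (simp add: c_def real_sqrt_mult)
  qed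
  have "(\<lambda>n. c * \<bar>wnorm (\<lambda>i. w n i - v0 i)\<bar>) \<longlonglongrightarrow> c * \<bar>0\<bar>"
    by (intro tendsto_intros assms(7))
  then have "(\<lambda>n. c * \<bar>wnorm (\<lambda>i. w n i - v0 i)\<bar>) \<longlonglongrightarrow> 0" by simp
  then show "(\<lambda>n. wnorm (\<lambda>i. u n t i - v t i)) \<longlonglongrightarrow> 0"
    by (rule Lim_null_comparison[rotated]) (simp add: bound)
qed

end
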